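(* Let $\Xi$ be the points of a rate-1 Poisson point process in an $L\times L$ square. Fix $d_0>0$ and an integer $n\ge1$. The probability that there exists a sequence $\xi_0,\xi_1,\dots,\xi_n$ of distinct points of $\Xi$ with \[ d_0\ge d(\xi_0,\xi_1)\ge d(\xi_1,\xi_2)\ge\dots\ge d(\xi_{n-1},\xi_n) \] is at most $\dfrac{L^2\pi^n d_0^{2n}}{n!}$.
   Context: $d$ denotes Euclidean distance in $\mathbb{R}^2$. *)

theory Defs
  imports "HOL-Probability.Probability"
begin

text \<open>Rate-1 Poisson point process on the square [0,L] x [0,L] in R^2 (points of type real \<times> real,
  whose product metric is the Euclidean one).  Standard construction: the number of points
  N is Poisson distributed with mean L^2 (= area), and the points are X 0, ..., X (N-1),
  where X 0, X 1, ... are i.i.d. uniform on the square, independent of N.\<close>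

definition square :: "real \<Rightarrow> (real \<times> real) set" where
  "square L = {0..L} \<times> {0..L}"

definition PPP :: "real \<Rightarrow> (nat \<times> (nat \<Rightarrow> real \<times> real)) measure" where
  "PPP L = measure_pmf (poisson_pmf (L^2)) \<Otimes>\<^sub>M
           (\<Pi>\<^sub>M i\<in>(UNIV::nat set). uniform_measure lborel (square L))"

definition PPP_points :: "nat \<times> (nat \<Rightarrow> real \<times> real) \<Rightarrow> (real \<times> real) set" where
  "PPP_points \<omega> = snd \<omega> ` {..<fst \<omega>}"

definition decr_chain_event ::
    "real \<Rightarrow> real \<Rightarrow> nat \<Rightarrow> (nat \<times> (nat \<Rightarrow> real \<times> real)) set" where
  "decr_chain_event L d0 n = {\<omega> \<in> space (PPP L).
      \<exists>\<xi> :: nat \<Rightarrow> real \<times> real.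
         (\<forall>j\<le>n. \<xi> j \<in> PPP_points \<omega>) \<and> inj_on \<xi> {..n} \<and>
         dist (\<xi> 0) (\<xi> 1) \<le> d0 \<and>
         (\<forall>j. 1 \<le> j \<and> j < n \<longrightarrow> dist (\<xi> j) (\<xi> (j+1)) \<le> dist (\<xi> (j-1)) (\<xi> j))}"

end

theory Submission
  imports Defs
begin

text \<open>
  Write the process as N points X 0, ..., X (N-1), i.i.d. uniform on the square
  of area L^2, with N Poisson of mean L^2.  A decreasing chain of n+1 distinct points is
  indexed by a list of n+1 distinct indices below N.  Fix such an index list: the first point
  is arbitrary, and given the previous point p and the previous step length r, the next point
  must lie in the disc of radius r around p; its new step length s then enters the bound for
  the rest of the chain.  Since the area of the disc of radius s is pi s^2, an induction along
  the list gives the chain probability bound (pi r^2 / L^2)^k / k! for k further points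
  (the key integral is the radial one, int over B(p,r) of |x-p|^(2k) = pi r^(2k+2)/(k+1)).
  A union bound over the N!/(N-n-1)! index lists and the Poisson factorial moment
  E[N!/(N-n-1)!] = (L^2)^(n+1) then give L^2 pi^n d0^(2n) / n!.
\<close>

subsection \<open>A radial integral in the plane\<close>

lemma emeasure_cball_plane:
  "r \<ge> 0 \<Longrightarrow> emeasure lborel (cball (c::real\<times>real) r) = ennreal (pi * r^2)"
  by (simp add: emeasure_cball unit_ball_vol_2 power2_eq_square)

lemma emeasure_cball_sqdist_le:
  fixes p :: "real\<times>real"
  assumes "R \<ge> 0"
  shows "emeasure lborel (cball p R \<inter> {x. (dist p x)^2 \<le> t})
       = ennreal (if t < 0 then 0 else pi * min (R^2) t)"
proof (cases "t < 0")
  case True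
  then have "cball p R \<inter> {x. (dist p x)^2 \<le> t} = {}"
    using True by (smt (verit) disjoint_iff mem_Collect_eq zero_le_power2)
  then show ?thesis using True by simp
next
  case False
  have sq_le: "x^2 \<le> t" if "0 \<le> x" "x \<le> sqrt t" for x :: real
    using False that by (metis power_mono real_sqrt_pow2 not_less)
  have "cball p R \<inter> {x. (dist p x)^2 \<le> t} = cball p (min R (sqrt t))"
    using False assms sq_le by (auto simp: real_le_rsqrt real_sqrt_le_iff' mem_cball)
  moreover have "(min R (sqrt t))^2 = min (R^2) t"
    using False assms sq_le[of R]
    by (cases "R \<le> sqrt t") (auto simp: min_def real_sqrt_le_iff' real_le_rsqrt)
  ultimately show ?thesis using False assms by (simp add: emeasure_cball_plane)
qed

lemma distr_sqdist_cball:
  fixes p :: "real\<times>real"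
  assumes R: "R \<ge> 0"
  shows "distr (density lborel (indicator (cball p R))) borel (\<lambda>x. (dist p x)^2)
       = density lborel (\<lambda>s. ennreal pi * indicator {0..R^2} s)" (is "?M1 = ?M2")
proof (rule cdf_unique')
  have cdf1: "emeasure ?M1 {..t} = ennreal (if t < 0 then 0 else pi * min (R^2) t)" for t
  proof -
    have "emeasure ?M1 {..t}
        = emeasure (density lborel (indicator (cball p R))) ((\<lambda>x. (dist p x)^2) -` {..t})"
      by (subst emeasure_distr) auto
    also have "\<dots> = emeasure lborel (cball p R \<inter> {x. (dist p x)^2 \<le> t})"
      by (subst emeasure_restricted) (auto simp: Int_commute vimage_def)
    finally show ?thesis using emeasure_cball_sqdist_le[OF R] by simp
  qed
  have cdf2: "emeasure ?M2 {..t} = ennreal (if t < 0 then 0 else pi * min (R^2) t)" for t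
  proof -
    have "emeasure ?M2 {..t} = (\<integral>\<^sup>+s. ennreal pi * indicator ({0..R^2} \<inter> {..t}) s \<partial>lborel)"
      by (subst emeasure_density) (auto intro!: nn_integral_cong simp: indicator_def)
    also have "\<dots> = ennreal pi * emeasure lborel ({0..R^2} \<inter> {..t})"
      by (subst nn_integral_cmult_indicator) auto
    also have "{0..R^2} \<inter> {..t} = (if t < 0 then {} else {0..min (R^2) t})" by auto
    finally show ?thesis using R by (auto simp: ennreal_mult')
  qed
  have total: "emeasure ?M1 UNIV = ennreal (pi * R^2)" "emeasure ?M2 UNIV = ennreal (pi * R^2)"
  proof -
    have "emeasure ?M1 UNIV = emeasure lborel (cball p R)"
      by (subst emeasure_distr) (auto simp: emeasure_restricted)
    then show "emeasure ?M1 UNIV = ennreal (pi * R^2)" using R by (simp add: emeasure_cball_plane)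
    have "emeasure ?M2 UNIV = (\<integral>\<^sup>+s. ennreal pi * indicator {0..R^2} s \<partial>lborel)"
      by (subst emeasure_density) auto
    also have "\<dots> = ennreal pi * emeasure lborel {0..R^2}"
      by (subst nn_integral_cmult_indicator) auto
    finally show "emeasure ?M2 UNIV = ennreal (pi * R^2)" using R by (simp add: ennreal_mult')
  qed
  show "finite_borel_measure ?M1" "finite_borel_measure ?M2"
    using total by (auto intro!: finite_borel_measure.intro finite_measureI simp: finite_borel_measure_axioms_def)
  show "cdf ?M1 = cdf ?M2"
    by (rule ext) (simp add: cdf_def measure_def cdf1 cdf2)
qed

lemma nn_integral_pi_power:
  assumes "A \<ge> 0"
  shows "(\<integral>\<^sup>+s. ennreal (pi * s^m) * indicator {0..A} s \<partial>lborel) = ennreal (pi * A^(Suc m) / Suc m)"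
proof -
  have deriv: "((\<lambda>s. pi * s^(Suc m) / Suc m) has_real_derivative pi * x^m) (at x)" for x
    using DERIV_cdivide[OF DERIV_cmult[OF DERIV_pow[of "Suc m" x], of pi], of "real (Suc m)"]
    by (simp del: of_nat_Suc)
  have "((\<lambda>s. pi * s^m) has_integral (pi * A^(Suc m) / Suc m - pi * 0^(Suc m) / Suc m)) {0..A}"
    using assms deriv
    by (intro fundamental_theorem_of_calculus)
       (auto simp: has_real_derivative_iff_has_vector_derivative[symmetric]
             intro: has_field_derivative_at_within)
  then have "((\<lambda>s. pi * s^m) has_integral (pi * A^(Suc m) / Suc m)) {0..A}" by simp
  from nn_integral_has_integral_lebesgue'[OF _ this] show ?thesis using assms by simp
qed

lemma nn_integral_cball_dist_power:
  fixes p :: "real\<times>real"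
  assumes R: "R \<ge> 0"
  shows "(\<integral>\<^sup>+x. indicator (cball p R) x * ennreal (dist p x ^ (2*m)) \<partial>lborel)
       = ennreal (pi * R^(2*m+2) / Suc m)"
proof -
  have "(\<integral>\<^sup>+x. indicator (cball p R) x * ennreal (dist p x ^ (2*m)) \<partial>lborel)
      = (\<integral>\<^sup>+x. ennreal (((dist p x)^2)^m) \<partial>density lborel (indicator (cball p R)))"
    by (subst nn_integral_density) (auto simp: power_mult intro!: borel_measurable_indicator borel_closed)
  also have "\<dots> = (\<integral>\<^sup>+s. ennreal (s^m)
                    \<partial>distr (density lborel (indicator (cball p R))) borel (\<lambda>x. (dist p x)^2))"
    by (subst nn_integral_distr) auto
  also have "\<dots> = (\<integral>\<^sup>+s. ennreal (pi * s^m) * indicator {0..R^2} s \<partial>lborel)"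
    unfolding distr_sqdist_cball[OF R]
    by (subst nn_integral_density) (auto intro!: nn_integral_cong simp: indicator_def ennreal_mult')
  also have "\<dots> = ennreal (pi * (R^2)^(Suc m) / Suc m)"
    by (rule nn_integral_pi_power) simp
  also have "(R^2)^(Suc m) = R^(2*m+2)"
    unfolding power_mult[symmetric] by simp
  finally show ?thesis .
qed

subsection \<open>Splitting off one coordinate of a product of probability spaces\<close>

lemma emeasure_PiM_split_coordinate:
  assumes M: "prob_space M" and i: "i \<in> I" and A: "A \<in> sets (PiM I (\<lambda>_. M))"
  shows "emeasure (PiM I (\<lambda>_. M)) A =
     (\<integral>\<^sup>+x. emeasure (PiM (I - {i}) (\<lambda>_. M)) {X \<in> space (PiM (I - {i}) (\<lambda>_. M)). X(i:=x) \<in> A} \<partial>M)"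
proof -
  let ?P' = "PiM (I - {i}) (\<lambda>_. M)"
  let ?upd = "\<lambda>(x, X). X(i := x)"
  interpret P': prob_space ?P' by (intro prob_space_PiM M)
  have distr_upd: "distr (M \<Otimes>\<^sub>M ?P') (PiM I (\<lambda>_. M)) ?upd = PiM I (\<lambda>_. M)"
    using distr_pair_PiM_eq_PiM[of "I - {i}" "\<lambda>_. M" i] M by (simp add: insert_absorb[OF i])
  have "(\<lambda>z. (snd z)(i := fst z)) \<in> measurable (M \<Otimes>\<^sub>M ?P') (PiM I (\<lambda>_. M))"
    by (rule measurable_fun_upd[where J="I - {i}"]) (use i in auto)
  then have upd_meas: "?upd \<in> measurable (M \<Otimes>\<^sub>M ?P') (PiM I (\<lambda>_. M))"
    by (simp add: case_prod_beta)
  have "emeasure (PiM I (\<lambda>_. M)) A = emeasure (M \<Otimes>\<^sub>M ?P') (?upd -` A \<inter> space (M \<Otimes>\<^sub>M ?P'))"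
    by (subst distr_upd[symmetric]) (rule emeasure_distr[OF upd_meas A])
  also have "\<dots> = (\<integral>\<^sup>+x. emeasure ?P' (Pair x -` (?upd -` A \<inter> space (M \<Otimes>\<^sub>M ?P'))) \<partial>M)"
    by (rule P'.emeasure_pair_measure_alt) (rule measurable_sets[OF upd_meas A])
  also have "\<dots> = (\<integral>\<^sup>+x. emeasure ?P' {X \<in> space ?P'. X(i:=x) \<in> A} \<partial>M)"
    by (intro nn_integral_cong arg_cong2[where f=emeasure] refl) (auto simp: space_pair_measure)
  finally show ?thesis .
qed

definition unif_square :: "real \<Rightarrow> (real\<times>real) measure" where
  "unif_square L = uniform_measure lborel (square L)"

lemma PPP_eq_unif_square:
  "PPP L = measure_pmf (poisson_pmf (L^2)) \<Otimes>\<^sub>M PiM UNIV (\<lambda>_. unif_square L)"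
  unfolding PPP_def unif_square_def ..

lemma sets_square[measurable]: "square L \<in> sets borel"
  unfolding square_def by (simp add: borel_closed closed_Times)

lemma emeasure_square: "L \<ge> 0 \<Longrightarrow> emeasure lborel (square L) = ennreal (L^2)"
proof -
  assume L: "L \<ge> 0"
  have "square L = cbox (0,0) (L,L)"
    unfolding square_def by (auto simp: cbox_def Basis_prod_def inner_prod_def)
  then show ?thesis using L by (simp add: emeasure_lborel_cbox_eq Basis_prod_def power2_eq_square)
qed

lemma prob_space_unif_square: "L > 0 \<Longrightarrow> prob_space (unif_square L)"
  unfolding unif_square_def by (rule prob_space_uniform_measure) (auto simp: emeasure_square)

lemma space_unif_square[simp]: "space (unif_square L) = UNIV"
  and sets_unif_square[simp, measurable_cong]: "sets (unif_square L) = sets borel"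
  by (simp_all add: unif_square_def)

lemma nn_integral_unif_square_le:
  assumes L: "L > 0" and f[measurable]: "f \<in> borel_measurable borel"
  shows "(\<integral>\<^sup>+x. f x \<partial>unif_square L) \<le> (\<integral>\<^sup>+x. f x \<partial>lborel) / ennreal (L^2)"
proof -
  have "(\<integral>\<^sup>+x. f x \<partial>unif_square L)
      = (\<integral>\<^sup>+x. f x * indicator (square L) x \<partial>lborel) / emeasure lborel (square L)"
    unfolding unif_square_def by (rule nn_integral_uniform_measure) auto
  also have "\<dots> \<le> (\<integral>\<^sup>+x. f x \<partial>lborel) / ennreal (L^2)"
    using L by (auto simp: emeasure_square indicator_def
                     intro!: divide_right_mono_ennreal nn_integral_mono mult_left_le)
  finally show ?thesis .
qed

lemma sets_cball_plane[measurable]: "cball (p::real\<times>real) r \<in> sets borel"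
  by (simp add: borel_closed)

lemma measurable_coordinate_unif_square:
  "j \<in> I \<Longrightarrow> (\<lambda>X. X j) \<in> borel_measurable (PiM I (\<lambda>_. unif_square L))"
  using measurable_component_singleton[of j I "\<lambda>_. unif_square L"]
  by (simp add: measurable_cong_sets[OF refl sets_unif_square])

fun decreasing_chain :: "'a::metric_space \<Rightarrow> real \<Rightarrow> 'a list \<Rightarrow> bool" where
  "decreasing_chain p r [] = True"
| "decreasing_chain p r (x # xs) = (dist p x \<le> r \<and> decreasing_chain x (dist p x) xs)"

lemma measurable_decreasing_chain:
  fixes H :: "'b \<Rightarrow> 'c \<Rightarrow> 'a::{metric_space, second_countable_topology}"
  assumes "f \<in> borel_measurable M" and "g \<in> borel_measurable M"
    and "\<And>j. j \<in> set js \<Longrightarrow> (\<lambda>\<omega>. H \<omega> j) \<in> borel_measurable M"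
  shows "Measurable.pred M (\<lambda>\<omega>. decreasing_chain (f \<omega>) (g \<omega>) (map (H \<omega>) js))"
  using assms
proof (induction js arbitrary: f g)
  case Nil
  then show ?case by simp
next
  case (Cons j js)
  note [measurable] = Cons.prems(1,2) Cons.prems(3)[of j, simplified]
  have "Measurable.pred M (\<lambda>\<omega>. decreasing_chain (H \<omega> j) (dist (f \<omega>) (H \<omega> j)) (map (H \<omega>) js))"
    by (rule Cons.IH) (use Cons.prems in auto)
  then show ?case by simp
qed

lemma decreasing_chain_of_seq:
  fixes \<xi> :: "nat \<Rightarrow> 'a::metric_space"
  assumes "\<forall>j. 0 < j \<and> j < k \<longrightarrow> dist (\<xi> j) (\<xi> (j+1)) \<le> dist (\<xi> (j-1)) (\<xi> j)"
    and "0 < k \<longrightarrow> dist (\<xi> 0) (\<xi> 1) \<le> r"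
  shows "decreasing_chain (\<xi> 0) r (map \<xi> [1..<Suc k])"
  using assms
proof (induction k arbitrary: \<xi> r)
  case 0
  then show ?case by simp
next
  case (Suc k)
  have "map \<xi> [1..<Suc (Suc k)] = \<xi> 1 # map (\<lambda>j. \<xi> (Suc j)) [1..<Suc k]"
    by (simp add: upt_conv_Cons map_Suc_upt[symmetric] del: upt_Suc)
  moreover have "decreasing_chain (\<xi> 1) (dist (\<xi> 0) (\<xi> 1)) (map (\<lambda>j. \<xi> (Suc j)) [1..<Suc k])"
    using Suc.IH[of "\<lambda>j. \<xi> (Suc j)"] Suc.prems(1) by force
  ultimately show ?case using Suc.prems(2) by simp
qed

subsection \<open>Probability of a decreasing chain among i.i.d. uniform points\<close>

definition chain_bound :: "real \<Rightarrow> nat \<Rightarrow> real \<Rightarrow> real" where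
  "chain_bound L k r = pi^k * r^(2*k) / (fact k * L^(2*k))"

lemma sets_decreasing_chain_PiM:
  assumes "set js \<subseteq> I" and "f \<in> borel_measurable (PiM I (\<lambda>_. unif_square L))"
  shows "{X \<in> space (PiM I (\<lambda>_. unif_square L)). decreasing_chain (f X) r (map X js)}
           \<in> sets (PiM I (\<lambda>_. unif_square L))"
proof -
  have "Measurable.pred (PiM I (\<lambda>_. unif_square L))
          (\<lambda>X. decreasing_chain (f X) ((\<lambda>_. r) X) (map ((\<lambda>X. X) X) js))"
    using assms by (intro measurable_decreasing_chain) (auto intro!: measurable_coordinate_unif_square)
  then show ?thesis by (simp add: pred_def)
qed

lemma chain_bound_step:
  assumes L: "L > 0" and r: "r \<ge> 0"
  shows "(\<integral>\<^sup>+x. indicator (cball p r) x * ennreal (chain_bound L k (dist p x)) \<partial>unif_square L)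
       \<le> ennreal (chain_bound L (Suc k) r)"
proof -
  define c where "c = pi^k / (fact k * L^(2*k))"
  have c: "c \<ge> 0" unfolding c_def using L by simp
  have rad: "pi * r^(2*k+2) / Suc k \<ge> 0" using r by simp
  have "(\<integral>\<^sup>+x. indicator (cball p r) x * ennreal (chain_bound L k (dist p x)) \<partial>unif_square L)
     \<le> (\<integral>\<^sup>+x. indicator (cball p r) x * ennreal (chain_bound L k (dist p x)) \<partial>lborel) / ennreal (L^2)"
    by (rule nn_integral_unif_square_le[OF L]) (unfold chain_bound_def, measurable)
  also have "(\<integral>\<^sup>+x. indicator (cball p r) x * ennreal (chain_bound L k (dist p x)) \<partial>lborel)
      = (\<integral>\<^sup>+x. ennreal c * (indicator (cball p r) x * ennreal (dist p x ^ (2*k))) \<partial>lborel)"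
    by (intro nn_integral_cong) (simp add: chain_bound_def c_def ennreal_mult'[symmetric] mult_ac)
  also have "\<dots> = ennreal c * ennreal (pi * r^(2*k+2) / Suc k)"
    by (subst nn_integral_cmult) (auto simp: nn_integral_cball_dist_power[OF r])
  also have "\<dots> = ennreal (c * (pi * r^(2*k+2) / Suc k))"
    by (rule ennreal_mult[OF c rad, symmetric])
  also have "\<dots> / ennreal (L^2) = ennreal (c * (pi * r^(2*k+2) / Suc k) / L^2)"
    using mult_nonneg_nonneg[OF c rad] L by (intro divide_ennreal) auto
  also have "c * (pi * r^(2*k+2) / Suc k) / L^2 = chain_bound L (Suc k) r"
    unfolding c_def chain_bound_def using L by (simp add: field_simps power_add power2_eq_square)
  finally show ?thesis by simp
qed

lemma emeasure_decreasing_chain_from: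
  assumes L: "L > 0"
  shows "r \<ge> 0 \<Longrightarrow> distinct js \<Longrightarrow> set js \<subseteq> I \<Longrightarrow>
    emeasure (PiM I (\<lambda>_. unif_square L))
      {X \<in> space (PiM I (\<lambda>_. unif_square L)). decreasing_chain p r (map X js)}
    \<le> ennreal (chain_bound L (length js) r)"
proof (induction js arbitrary: I p r)
  case Nil
  interpret prob_space "PiM I (\<lambda>_. unif_square L)" by (intro prob_space_PiM prob_space_unif_square L)
  show ?case by (simp add: chain_bound_def emeasure_space_1)
next
  case (Cons i js)
  let ?P' = "PiM (I - {i}) (\<lambda>_. unif_square L)"
  let ?A = "{X \<in> space (PiM I (\<lambda>_. unif_square L)). decreasing_chain p r (map X (i # js))}"
  have i: "i \<in> I" and i_js: "i \<notin> set js" using Cons.prems by auto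
  have "emeasure (PiM I (\<lambda>_. unif_square L)) ?A
      = (\<integral>\<^sup>+x. emeasure ?P' {X \<in> space ?P'. X(i:=x) \<in> ?A} \<partial>unif_square L)"
    using Cons.prems
    by (intro emeasure_PiM_split_coordinate prob_space_unif_square L i sets_decreasing_chain_PiM) auto
  also have "\<dots> \<le> (\<integral>\<^sup>+x. indicator (cball p r) x * ennreal (chain_bound L (length js) (dist p x))
                        \<partial>unif_square L)"
  proof (rule nn_integral_mono)
    fix x
    show "emeasure ?P' {X \<in> space ?P'. X(i:=x) \<in> ?A}
          \<le> indicator (cball p r) x * ennreal (chain_bound L (length js) (dist p x))"
    proof (cases "dist p x \<le> r")
      case True
      have "emeasure ?P' {X \<in> space ?P'. X(i:=x) \<in> ?A}
          \<le> emeasure ?P' {X \<in> space ?P'. decreasing_chain x (dist p x) (map X js)}"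
        using i_js Cons.prems
        by (intro emeasure_mono sets_decreasing_chain_PiM) (auto simp: map_fun_upd)
      also have "\<dots> \<le> ennreal (chain_bound L (length js) (dist p x))"
        by (rule Cons.IH) (use Cons.prems in auto)
      finally show ?thesis using True by (simp add: mem_cball)
    next
      case False
      then have no_chain: "{X \<in> space ?P'. X(i:=x) \<in> ?A} = {}" by auto
      show ?thesis unfolding no_chain by simp
    qed
  qed
  also have "\<dots> \<le> ennreal (chain_bound L (Suc (length js)) r)"
    by (rule chain_bound_step[OF L Cons.prems(1)])
  finally show ?case by simp
qed

lemma emeasure_decreasing_chain:
  assumes L: "L > 0" and r: "r \<ge> 0" and d: "distinct (i # js)" and I: "set (i # js) \<subseteq> I"
  shows "emeasure (PiM I (\<lambda>_. unif_square L))
           {X \<in> space (PiM I (\<lambda>_. unif_square L)). decreasing_chain (X i) r (map X js)}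
         \<le> ennreal (chain_bound L (length js) r)"
proof -
  let ?P' = "PiM (I - {i}) (\<lambda>_. unif_square L)"
  let ?A = "{X \<in> space (PiM I (\<lambda>_. unif_square L)). decreasing_chain (X i) r (map X js)}"
  interpret U: prob_space "unif_square L" by (rule prob_space_unif_square[OF L])
  have i: "i \<in> I" and i_js: "i \<notin> set js" using I d by auto
  have "emeasure (PiM I (\<lambda>_. unif_square L)) ?A
      = (\<integral>\<^sup>+x. emeasure ?P' {X \<in> space ?P'. X(i:=x) \<in> ?A} \<partial>unif_square L)"
    using I i by (intro emeasure_PiM_split_coordinate prob_space_unif_square L sets_decreasing_chain_PiM) auto
  also have "\<dots> \<le> (\<integral>\<^sup>+x. ennreal (chain_bound L (length js) r) \<partial>unif_square L)"
  proof (rule nn_integral_mono)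
    fix x
    have "emeasure ?P' {X \<in> space ?P'. X(i:=x) \<in> ?A}
        \<le> emeasure ?P' {X \<in> space ?P'. decreasing_chain x r (map X js)}"
      using i_js I d by (intro emeasure_mono sets_decreasing_chain_PiM) (auto simp: map_fun_upd)
    also have "\<dots> \<le> ennreal (chain_bound L (length js) r)"
      by (rule emeasure_decreasing_chain_from[OF L r]) (use I d in auto)
    finally show "emeasure ?P' {X \<in> space ?P'. X(i:=x) \<in> ?A} \<le> ennreal (chain_bound L (length js) r)" .
  qed
  also have "\<dots> = ennreal (chain_bound L (length js) r)"
    using U.emeasure_space_1 by simp
  finally show ?thesis .
qed

subsection \<open>Ordered tuples of distinct indices and Poisson factorial moments\<close>

definition index_lists :: "nat \<Rightarrow> nat \<Rightarrow> nat list set" where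
  "index_lists k N = {xs. length xs = k \<and> distinct xs \<and> set xs \<subseteq> {..<N}}"

lemma finite_index_lists: "finite (index_lists k N)"
proof -
  have "index_lists k N \<subseteq> {xs. set xs \<subseteq> {..<N} \<and> length xs = k}" by (auto simp: index_lists_def)
  moreover have "finite {xs. set xs \<subseteq> {..<N} \<and> length xs = k}" by (rule finite_lists_length_eq) simp
  ultimately show ?thesis by (rule finite_subset)
qed

lemma card_index_lists:
  "real (card (index_lists k N)) = (if k \<le> N then fact N / fact (N - k) else 0)"
proof (cases "k \<le> N")
  case True
  have "card (index_lists k N) = \<Prod>{N - k + 1 .. N}"
    unfolding index_lists_def using card_lists_distinct_length_eq[of "{..<N}" k] True by simp
  also have "\<dots> = fact N div fact (N - k)"
    using fact_div_fact[of "N - k" N] True by simp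
  finally show ?thesis using True by (simp add: real_of_nat_div fact_dvd)
next
  case False
  have "length xs \<le> N" if "distinct xs" "set xs \<subseteq> {..<N}" for xs :: "nat list"
    using that card_mono[of "{..<N}" "set xs"] distinct_card[of xs] by auto
  then have "index_lists k N = {}" using False by (auto simp: index_lists_def)
  then show ?thesis using False by simp
qed

lemma poisson_factorial_moment:
  assumes lam: "lam > 0"
  shows "(\<integral>\<^sup>+N. ennreal (card (index_lists k N)) \<partial>measure_pmf (poisson_pmf lam)) = ennreal (lam^k)"
proof -
  define a where "a N = lam^N / fact N * exp (-lam) * (if k \<le> N then fact N / fact (N - k) else 0)" for N
  have a_nonneg: "a N \<ge> 0" for N unfolding a_def using lam by simp
  have shift: "a (M + k) = lam^k * exp (-lam) * (lam^M /\<^sub>R fact M)" for M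
    unfolding a_def by (simp add: power_add field_simps)
  have "(\<lambda>M. lam^k * exp (-lam) * (lam^M /\<^sub>R fact M)) sums (lam^k * exp (-lam) * exp lam)"
    by (intro sums_mult exp_converges)
  then have "(\<lambda>M. a (M + k)) sums (lam^k)"
    by (simp add: shift exp_minus field_simps)
  moreover have "(\<Sum>i<k. a i) = 0" by (auto simp: a_def intro!: sum.neutral)
  ultimately have a_sums: "a sums lam^k" by (simp add: sums_iff_shift)
  have "(\<integral>\<^sup>+N. ennreal (card (index_lists k N)) \<partial>measure_pmf (poisson_pmf lam))
      = (\<integral>\<^sup>+N. ennreal (a N) \<partial>count_space UNIV)"
    unfolding nn_integral_measure_pmf using lam
    by (intro nn_integral_cong) (simp add: a_def card_index_lists ennreal_mult'[symmetric] del: of_nat_fact)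
  also have "\<dots> = ennreal (lam^k)"
    by (simp add: nn_integral_count_space_nat suminf_ennreal_eq[OF a_nonneg a_sums])
  finally show ?thesis .
qed

lemma index_list_of_points:
  assumes "\<forall>j\<le>n. \<xi> j \<in> X ` {..<N}" and "inj_on \<xi> {..n}"
  shows "\<exists>xs\<in>index_lists (Suc n) N. \<forall>j\<le>n. X (xs ! j) = \<xi> j"
proof -
  have "\<forall>j\<in>{..n}. \<exists>i. i < N \<and> X i = \<xi> j"
    using assms(1) by force
  then obtain idx where idx: "\<And>j. j \<le> n \<Longrightarrow> idx j < N \<and> X (idx j) = \<xi> j"
    by (auto dest!: bchoice)
  have "inj_on idx {..n}"
  proof (rule inj_onI)
    fix a b assume "a \<in> {..n}" "b \<in> {..n}" "idx a = idx b"
    then show "a = b" using idx[of a] idx[of b] assms(2) by (auto dest: inj_onD)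
  qed
  then have "map idx [0..<Suc n] \<in> index_lists (Suc n) N"
    using idx by (auto simp: index_lists_def distinct_map atLeastLessThanSuc_atLeastAtMost atMost_atLeast0
                        simp del: upt_Suc)
  moreover have "\<forall>j\<le>n. X (map idx [0..<Suc n] ! j) = \<xi> j"
    using idx by (simp del: upt_Suc add: nth_map_upt)
  ultimately show ?thesis by blast
qed

definition is_decr_chain :: "real \<Rightarrow> nat \<Rightarrow> (nat \<Rightarrow> 'a::metric_space) \<Rightarrow> bool" where
  "is_decr_chain d0 n \<xi> \<longleftrightarrow> inj_on \<xi> {..n} \<and> dist (\<xi> 0) (\<xi> 1) \<le> d0 \<and>
     (\<forall>j. 1 \<le> j \<and> j < n \<longrightarrow> dist (\<xi> j) (\<xi> (j+1)) \<le> dist (\<xi> (j-1)) (\<xi> j))"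

lemma decr_chain_event_altdef:
  "decr_chain_event L d0 n
     = {\<omega> \<in> space (PPP L). \<exists>\<xi>. (\<forall>j\<le>n. \<xi> j \<in> PPP_points \<omega>) \<and> is_decr_chain d0 n \<xi>}"
  unfolding decr_chain_event_def is_decr_chain_def by blast

lemma is_decr_chain_cong:
  assumes n: "1 \<le> n" and eq: "\<And>j. j \<le> n \<Longrightarrow> \<xi> j = \<eta> j"
  shows "is_decr_chain d0 n \<xi> = is_decr_chain d0 n \<eta>"
proof -
  have "inj_on \<xi> {..n} = inj_on \<eta> {..n}" by (rule inj_on_cong) (use eq in auto)
  moreover have "\<xi> 0 = \<eta> 0" "\<xi> 1 = \<eta> 1" using eq n by auto
  moreover have "dist (\<xi> j) (\<xi> (j+1)) \<le> dist (\<xi> (j-1)) (\<xi> j) \<longleftrightarrow>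
                 dist (\<eta> j) (\<eta> (j+1)) \<le> dist (\<eta> (j-1)) (\<eta> j)" if "j < n" for j
    using that eq[of j] eq[of "j+1"] eq[of "j-1"] by simp
  ultimately show ?thesis unfolding is_decr_chain_def by auto
qed

lemma is_decr_chain_imp_decreasing_chain:
  "is_decr_chain d0 n \<xi> \<Longrightarrow> decreasing_chain (\<xi> 0) d0 (map \<xi> [1..<Suc n])"
  unfolding is_decr_chain_def by (rule decreasing_chain_of_seq) auto

lemma measurable_PPP_coordinates[measurable]:
  "(\<lambda>\<omega>. snd \<omega> i) \<in> borel_measurable (PPP L)"
  "fst \<in> measurable (PPP L) (count_space UNIV)"
proof -
  show "(\<lambda>\<omega>. snd \<omega> i) \<in> borel_measurable (PPP L)"
    unfolding PPP_eq_unif_square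
    by (rule measurable_compose[OF measurable_snd measurable_coordinate_unif_square]) simp
  have "fst \<in> measurable (PPP L) (measure_pmf (poisson_pmf (L^2)))"
    unfolding PPP_eq_unif_square by (rule measurable_fst)
  then show "fst \<in> measurable (PPP L) (count_space UNIV)"
    by (simp add: measurable_cong_sets[OF refl sets_measure_pmf_count_space])
qed

lemma sets_decr_chain_indices:
  "{\<omega> \<in> space (PPP L). fst \<omega> = N \<and> is_decr_chain d0 n (\<lambda>j. snd \<omega> (xs!j))} \<in> sets (PPP L)"
proof -
  have inj_dist: "inj_on \<xi> {..n} \<longleftrightarrow> (\<forall>a\<in>{..n}. \<forall>b\<in>{..n}. dist (\<xi> a) (\<xi> b) \<le> 0 \<longrightarrow> a = b)"
    for \<xi> :: "nat \<Rightarrow> real \<times> real"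
    by (simp add: inj_on_def)
  show ?thesis unfolding is_decr_chain_def inj_dist by measurable
qed

text \<open>Decomposition of the event according to the number N of points and to the indices of the
  chain points; this gives measurability.\<close>
lemma decr_chain_event_UN:
  assumes n: "1 \<le> n"
  shows "decr_chain_event L d0 n = (\<Union>N. \<Union>xs\<in>index_lists (Suc n) N.
           {\<omega> \<in> space (PPP L). fst \<omega> = N \<and> is_decr_chain d0 n (\<lambda>j. snd \<omega> (xs!j))})"
proof (intro equalityI subsetI)
  fix \<omega> assume "\<omega> \<in> decr_chain_event L d0 n"
  then obtain \<xi> where \<omega>: "\<omega> \<in> space (PPP L)" and pts: "\<forall>j\<le>n. \<xi> j \<in> snd \<omega> ` {..<fst \<omega>}"
    and chain: "is_decr_chain d0 n \<xi>"
    by (auto simp: decr_chain_event_altdef PPP_points_def)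
  obtain xs where xs: "xs \<in> index_lists (Suc n) (fst \<omega>)" and pos: "\<forall>j\<le>n. snd \<omega> (xs!j) = \<xi> j"
    using index_list_of_points[OF pts] chain by (auto simp: is_decr_chain_def)
  have "is_decr_chain d0 n (\<lambda>j. snd \<omega> (xs!j))"
    using chain is_decr_chain_cong[OF n, of "\<lambda>j. snd \<omega> (xs!j)" \<xi>] pos by simp
  with \<omega> show "\<omega> \<in> (\<Union>N. \<Union>xs\<in>index_lists (Suc n) N.
           {\<omega> \<in> space (PPP L). fst \<omega> = N \<and> is_decr_chain d0 n (\<lambda>j. snd \<omega> (xs!j))})"
    by (intro UN_I[of "fst \<omega>"] UN_I[OF xs]) simp_all
next
  fix \<omega> assume "\<omega> \<in> (\<Union>N. \<Union>xs\<in>index_lists (Suc n) N.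
           {\<omega> \<in> space (PPP L). fst \<omega> = N \<and> is_decr_chain d0 n (\<lambda>j. snd \<omega> (xs!j))})"
  then obtain xs where \<omega>: "\<omega> \<in> space (PPP L)" and xs: "xs \<in> index_lists (Suc n) (fst \<omega>)"
    and chain: "is_decr_chain d0 n (\<lambda>j. snd \<omega> (xs!j))" by auto
  have "snd \<omega> (xs!j) \<in> PPP_points \<omega>" if "j \<le> n" for j
  proof -
    have "xs!j \<in> set xs" using xs that by (simp add: index_lists_def)
    then have "xs!j \<in> {..<fst \<omega>}" using xs by (auto simp: index_lists_def)
    then show ?thesis unfolding PPP_points_def by (rule imageI)
  qed
  with \<omega> chain show "\<omega> \<in> decr_chain_event L d0 n"
    unfolding decr_chain_event_altdef by (intro CollectI conjI exI[of _ "\<lambda>j. snd \<omega> (xs!j)"]) auto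
qed

lemma emeasure_decr_chain_slice:
  assumes L: "L > 0" and d0: "d0 \<ge> 0" and n: "1 \<le> n"
  shows "emeasure (PiM UNIV (\<lambda>_. unif_square L)) (Pair N -` decr_chain_event L d0 n)
         \<le> of_nat (card (index_lists (Suc n) N)) * ennreal (chain_bound L n d0)"
proof -
  let ?P = "PiM UNIV (\<lambda>_::nat. unif_square L)"
  define B where "B xs = {X \<in> space ?P. decreasing_chain (X (hd xs)) d0 (map X (tl xs))}" for xs
  have B_sets: "B xs \<in> sets ?P" for xs
    unfolding B_def by (rule sets_decreasing_chain_PiM) (auto intro: measurable_coordinate_unif_square)
  have B_le: "emeasure ?P (B xs) \<le> ennreal (chain_bound L n d0)" if xs: "xs \<in> index_lists (Suc n) N" for xs
  proof -
    obtain i js where "xs = i # js" and "length js = n" "distinct (i # js)"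
      using xs by (cases xs) (auto simp: index_lists_def)
    then show ?thesis
      unfolding B_def using emeasure_decreasing_chain[OF L d0, of i js UNIV] by simp
  qed
  have "Pair N -` decr_chain_event L d0 n \<subseteq> (\<Union>xs\<in>index_lists (Suc n) N. B xs)"
  proof
    fix X assume "X \<in> Pair N -` decr_chain_event L d0 n"
    then obtain xs where xs: "xs \<in> index_lists (Suc n) N"
      and chain: "is_decr_chain d0 n (\<lambda>j. X (xs!j))" and X: "(N, X) \<in> space (PPP L)"
      unfolding decr_chain_event_UN[OF n] by auto
    obtain i js where xs_eq: "xs = i # js" and len: "length js = n"
      using xs by (cases xs) (auto simp: index_lists_def)
    have "map (\<lambda>j. X (xs!j)) [1..<Suc n] = map X js"
      unfolding xs_eq using len by (intro nth_equalityI) (auto simp del: upt_Suc)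
    then have "decreasing_chain (X (hd xs)) d0 (map X (tl xs))"
      using is_decr_chain_imp_decreasing_chain[OF chain] xs_eq by simp
    moreover have "X \<in> space ?P" using X by (simp add: PPP_eq_unif_square space_pair_measure)
    ultimately show "X \<in> (\<Union>xs\<in>index_lists (Suc n) N. B xs)" using xs unfolding B_def by blast
  qed
  then have "emeasure ?P (Pair N -` decr_chain_event L d0 n) \<le> emeasure ?P (\<Union>xs\<in>index_lists (Suc n) N. B xs)"
    by (rule emeasure_mono) (use finite_index_lists B_sets in auto)
  also have "\<dots> \<le> (\<Sum>xs\<in>index_lists (Suc n) N. emeasure ?P (B xs))"
    by (rule emeasure_subadditive_finite) (use finite_index_lists B_sets in auto)
  also have "\<dots> \<le> (\<Sum>xs\<in>index_lists (Suc n) N. ennreal (chain_bound L n d0))"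
    by (rule sum_mono) (rule B_le)
  finally show ?thesis by simp
qed

theorem lemma5:
  fixes L d0 :: real and n :: nat
  assumes "L > 0" and "d0 > 0" and "n \<ge> 1"
  shows "decr_chain_event L d0 n \<in> sets (PPP L) \<and>
         measure (PPP L) (decr_chain_event L d0 n) \<le> L^2 * pi^n * d0^(2*n) / fact n"
proof -
  let ?Pois = "measure_pmf (poisson_pmf (L^2))" and ?P = "PiM UNIV (\<lambda>_::nat. unif_square L)"
  let ?E = "decr_chain_event L d0 n" and ?c = "chain_bound L n d0"
  interpret P: prob_space ?P by (intro prob_space_PiM prob_space_unif_square assms(1))
  have E_sets: "?E \<in> sets (PPP L)"
    unfolding decr_chain_event_UN[OF assms(3)]
    using finite_index_lists sets_decr_chain_indices by (intro sets.countable_UN' sets.finite_UN) auto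
  have c_nonneg: "?c \<ge> 0" unfolding chain_bound_def using assms(1) by simp
  have "emeasure (PPP L) ?E = (\<integral>\<^sup>+N. emeasure ?P (Pair N -` ?E) \<partial>?Pois)"
    using E_sets unfolding PPP_eq_unif_square by (rule P.emeasure_pair_measure_alt)
  also have "\<dots> \<le> (\<integral>\<^sup>+N. ennreal (card (index_lists (Suc n) N)) * ennreal ?c \<partial>?Pois)"
    by (rule nn_integral_mono)
       (use emeasure_decr_chain_slice[OF assms(1) less_imp_le[OF assms(2)] assms(3)]
        in \<open>simp add: ennreal_of_nat_eq_real_of_nat\<close>)
  also have "\<dots> = (\<integral>\<^sup>+N. ennreal (card (index_lists (Suc n) N)) \<partial>?Pois) * ennreal ?c"
    by (rule nn_integral_multc) simp
  also have "\<dots> = ennreal ((L^2)^(Suc n) * ?c)"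
    using assms(1) c_nonneg by (simp add: poisson_factorial_moment ennreal_mult)
  also have "(L^2)^(Suc n) * ?c = L^2 * pi^n * d0^(2*n) / fact n"
    unfolding chain_bound_def using assms(1) by (simp add: field_simps power_mult[symmetric] power_add)
  finally show ?thesis
    using E_sets by (simp add: measure_def enn2real_leI)
qed

end
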